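(* Assume $k\ge 2\cdot10^8$, the stream is in random order, and there exists a dense set $D\subseteq V$. Then with probability at least $0.01$ the output $S$ of Algorithm 1 satisfies $f(S)\ge0.50025\cdot\mathrm{OPT}$.
   Context: $V$ is a finite ground set with $|V|=n$; $f:2^V\to\mathbb{R}_{\ge0}$ is monotone, submodular and normalized ($f(\emptyset)=0$); $f(X\mid Y)=f(X\cup Y)-f(Y)$ and $f(e\mid Y)=f(\{e\}\mid Y)$. $k$ is a positive integer with $k\le n$, $\mathrm{OPT}=\max\{f(S):S\subseteq V,|S|\le k\}$. A stream is an ordering $e_1,\dots,e_n$ of $V$; "random order" means a uniformly random permutation. A set $D$ is dense if $|D|\le\eta k$ and $f(D)\ge\frac{1-\gamma}{2}\mathrm{OPT}$, where $\gamma=10^{-2}$, $\eta=5\cdot10^{-5}$. Algorithm 1 (knows $\mathrm{OPT}$): start with $S=\emptyset$; for $i=1,\dots,n$, add $e_i$ to $S$ if $|S|<k$ and either ($i\le 0.9n$ and $f(e_i\mid S)\ge\frac{100}{k}\mathrm{OPT}$) or ($i>0.9n$ and $f(e_i\mid S)\ge\frac{1}{10k}\mathrm{OPT}$); return $S$. *)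

theory Defs
  imports "HOL-Probability.Probability"
begin

definition monotone_fn :: "'a set \<Rightarrow> ('a set \<Rightarrow> real) \<Rightarrow> bool" where
  "monotone_fn V f \<longleftrightarrow> (\<forall>A B. A \<subseteq> B \<and> B \<subseteq> V \<longrightarrow> f A \<le> f B)"

definition submodular :: "'a set \<Rightarrow> ('a set \<Rightarrow> real) \<Rightarrow> bool" where
  "submodular V f \<longleftrightarrow>
     (\<forall>A B. A \<subseteq> V \<and> B \<subseteq> V \<longrightarrow> f (A \<union> B) + f (A \<inter> B) \<le> f A + f B)"

definition OPT :: "'a set \<Rightarrow> ('a set \<Rightarrow> real) \<Rightarrow> nat \<Rightarrow> real" where
  "OPT V f k = Max (f ` {S. S \<subseteq> V \<and> card S \<le> k})"

definition gamma :: real where "gamma = 1/100"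
definition eta :: real where "eta = 5 / 100000"

definition dense :: "'a set \<Rightarrow> ('a set \<Rightarrow> real) \<Rightarrow> nat \<Rightarrow> 'a set \<Rightarrow> bool" where
  "dense V f k D \<longleftrightarrow> D \<subseteq> V \<and> real (card D) \<le> eta * real k
      \<and> f D \<ge> (1 - gamma) / 2 * OPT V f k"

text \<open>Algorithm 1. Parameters: f, the value opt (= OPT), k, n (stream length),
  i = 1-based index of the current element, remaining stream, current set S.\<close>
fun alg1_aux :: "('a set \<Rightarrow> real) \<Rightarrow> real \<Rightarrow> nat \<Rightarrow> nat \<Rightarrow> nat \<Rightarrow> 'a list \<Rightarrow> 'a set \<Rightarrow> 'a set" where
  "alg1_aux f opt k n i [] S = S"
| "alg1_aux f opt k n i (e # es) S =
     alg1_aux f opt k n (Suc i) es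
       (if card S < k \<and>
           ((real i \<le> 9/10 * real n \<and> f (insert e S) - f S \<ge> 100 / real k * opt) \<or>
            (real i > 9/10 * real n \<and> f (insert e S) - f S \<ge> 1 / (10 * real k) * opt))
        then insert e S else S)"

definition algorithm1 :: "('a set \<Rightarrow> real) \<Rightarrow> real \<Rightarrow> nat \<Rightarrow> 'a list \<Rightarrow> 'a set" where
  "algorithm1 f opt k xs = alg1_aux f opt k (length xs) 1 xs {}"

end

theory Submission
  imports Defs
begin

text \<open>Split the random stream at m = 9n div 10. In the head the threshold 100 OPT/k admits at
  most k/100 elements, so afterwards every head element has marginal value at most 100 OPT/k.
  Give D an additive lower bound h, and Sopt - D, for an optimal set Sopt, an additive lower
  bound g on top of D.
  If S ends up full, the tail phase adds 0.099 OPT to a head solution worth at least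
  f (D \<inter> head) - 0.005 OPT. Otherwise every tail element has marginal value below OPT/(10k), so
  f S is close to the value of D together with the few heavy elements of Sopt - D and the light
  elements of Sopt - D that fall into the tail, which carry about a tenth of their weight.
  By Markov's inequality most of the h-weight of D lies in the head except with probability 0.59,
  and by Chebyshev's inequality the light tail weight is near its mean except with probability 0.06.\<close>

definition alg1_threshold :: "real \<Rightarrow> nat \<Rightarrow> nat \<Rightarrow> nat \<Rightarrow> real" where
  "alg1_threshold opt k n i =
     (if real i \<le> 9/10 * real n then 100 / real k * opt else 1 / (10 * real k) * opt)"

lemma alg1_aux_Cons:
  "alg1_aux f opt k n i (e # es) S = alg1_aux f opt k n (Suc i) es
     (if card S < k \<and> alg1_threshold opt k n i \<le> f (insert e S) - f S then insert e S else S)"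
  unfolding alg1_threshold_def by (auto intro!: arg_cong[where f = "alg1_aux f opt k n (Suc i) es"])

declare alg1_aux.simps(2)[simp del]

lemma alg1_threshold_head: "j \<le> 9 * n div 10 \<Longrightarrow> alg1_threshold opt k n j = 100 / real k * opt"
proof -
  assume "j \<le> 9 * n div 10"
  then have "real (10 * j) \<le> real (9 * n)" by linarith
  then show ?thesis by (simp add: alg1_threshold_def)
qed

lemma alg1_threshold_tail: "9 * n div 10 < j \<Longrightarrow> alg1_threshold opt k n j = 1 / (10 * real k) * opt"
proof -
  assume "9 * n div 10 < j"
  then have "real (9 * n) < real (10 * j)" by linarith
  then show ?thesis by (simp add: alg1_threshold_def)
qed

lemma alg1_aux_append:
  "alg1_aux f opt k n i (xs @ ys) S = alg1_aux f opt k n (i + length xs) ys (alg1_aux f opt k n i xs S)"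
  by (induction xs arbitrary: i S) (simp_all add: alg1_aux_Cons)

lemma alg1_aux_superset: "S \<subseteq> alg1_aux f opt k n i es S"
proof (induction es arbitrary: i S)
  case (Cons e es)
  have "insert e S \<subseteq> alg1_aux f opt k n (Suc i) es (insert e S)"
    "S \<subseteq> alg1_aux f opt k n (Suc i) es S" by (rule Cons.IH)+
  then show ?case by (auto simp: alg1_aux_Cons)
qed simp

lemma alg1_aux_subset: "alg1_aux f opt k n i es S \<subseteq> S \<union> set es"
proof (induction es arbitrary: i S)
  case (Cons e es)
  show ?case using Cons.IH[where i="Suc i" and S="insert e S"] Cons.IH[where i="Suc i" and S=S]
    by (auto simp: alg1_aux_Cons)
qed simp

lemma algorithm1_subset: "algorithm1 f opt k xs \<subseteq> set xs"
  using alg1_aux_subset[of f opt k "length xs" 1 xs "{}"] by (simp add: algorithm1_def)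

lemma alg1_aux_card_le:
  assumes "finite S" "card S \<le> k"
  shows "finite (alg1_aux f opt k n i es S) \<and> card (alg1_aux f opt k n i es S) \<le> k"
  using assms
proof (induction es arbitrary: i S)
  case (Cons e es)
  then show ?case by (auto simp: alg1_aux_Cons card_insert_if)
qed simp

lemma alg1_aux_gain:
  assumes "\<forall>j. i \<le> j \<longrightarrow> j < i + length es \<longrightarrow> alg1_threshold opt k n j = \<tau>" "0 \<le> \<tau>" "finite S"
  shows "(real (card (alg1_aux f opt k n i es S)) - real (card S)) * \<tau>
           \<le> f (alg1_aux f opt k n i es S) - f S"
  using assms
proof (induction es arbitrary: i S)
  case (Cons e es)
  define S' where "S' = (if card S < k \<and> \<tau> \<le> f (insert e S) - f S then insert e S else S)"
  have "alg1_threshold opt k n i = \<tau>" using Cons.prems(1) by auto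
  then have run: "alg1_aux f opt k n i (e # es) S = alg1_aux f opt k n (Suc i) es S'"
    by (simp add: alg1_aux_Cons S'_def)
  have "(real (card (alg1_aux f opt k n (Suc i) es S')) - real (card S')) * \<tau>
          \<le> f (alg1_aux f opt k n (Suc i) es S') - f S'"
    using Cons.prems by (intro Cons.IH) (auto simp: S'_def)
  moreover have "(real (card S') - real (card S)) * \<tau> \<le> f S' - f S"
    using Cons.prems(3) by (auto simp: S'_def card_insert_if insert_absorb)
  ultimately show ?case unfolding run left_diff_distrib by linarith
qed simp

lemma alg1_aux_rejected:
  assumes "\<forall>j. i \<le> j \<longrightarrow> j < i + length es \<longrightarrow> alg1_threshold opt k n j = \<tau>"
    and "e \<in> set es" "e \<notin> alg1_aux f opt k n i es S"
  shows "\<exists>T. S \<subseteq> T \<and> T \<subseteq> alg1_aux f opt k n i es S \<and> \<not> (card T < k \<and> \<tau> \<le> f (insert e T) - f T)"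
  using assms
proof (induction es arbitrary: i S)
  case (Cons x es)
  define S' where "S' = (if card S < k \<and> \<tau> \<le> f (insert x S) - f S then insert x S else S)"
  have "alg1_threshold opt k n i = \<tau>" using Cons.prems(1) by auto
  then have run: "alg1_aux f opt k n i (x # es) S = alg1_aux f opt k n (Suc i) es S'"
    by (simp add: alg1_aux_Cons S'_def)
  have S'_run: "S' \<subseteq> alg1_aux f opt k n (Suc i) es S'" by (rule alg1_aux_superset)
  have S_S': "S \<subseteq> S'" by (auto simp: S'_def)
  show ?case
  proof (cases "e = x")
    case True
    then have "\<not> (card S < k \<and> \<tau> \<le> f (insert e S) - f S)"
      using Cons.prems(3) S'_run unfolding run S'_def by auto
    then show ?thesis using run S'_run S_S' by blast
  next
    case False
    then obtain T where "S' \<subseteq> T" "T \<subseteq> alg1_aux f opt k n (Suc i) es S'"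
        "\<not> (card T < k \<and> \<tau> \<le> f (insert e T) - f T)"
      using Cons.IH[where i="Suc i" and S=S'] Cons.prems run by auto
    then show ?thesis using S_S' run by auto
  qed
qed simp

locale monotone_submodular =
  fixes V :: "'a set" and f :: "'a set \<Rightarrow> real"
  assumes monotone: "monotone_fn V f" and submodular: "submodular V f"
begin

lemma f_mono: "A \<subseteq> B \<Longrightarrow> B \<subseteq> V \<Longrightarrow> f A \<le> f B"
  using monotone unfolding monotone_fn_def by blast

lemma f_submod: "A \<subseteq> V \<Longrightarrow> B \<subseteq> V \<Longrightarrow> f (A \<union> B) + f (A \<inter> B) \<le> f A + f B"
  using submodular unfolding submodular_def by blast

lemma marginal_union_antimono:
  assumes "B \<subseteq> B'" "B' \<subseteq> V" "U \<subseteq> V"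
  shows "f (B' \<union> U) - f B' \<le> f (B \<union> U) - f B"
proof -
  have "f ((B \<union> U) \<union> B') + f ((B \<union> U) \<inter> B') \<le> f (B \<union> U) + f B'"
    using assms by (intro f_submod) auto
  moreover have "f B \<le> f ((B \<union> U) \<inter> B')" using assms by (intro f_mono) auto
  moreover have "(B \<union> U) \<union> B' = B' \<union> U" using assms by auto
  ultimately show ?thesis by simp
qed

lemma marginal_antimono:
  "T \<subseteq> R \<Longrightarrow> R \<subseteq> V \<Longrightarrow> e \<in> V \<Longrightarrow> f (insert e R) - f R \<le> f (insert e T) - f T"
  using marginal_union_antimono[of T R "{e}"] by simp

lemma marginal_le_sum_marginals:
  "finite U \<Longrightarrow> U \<subseteq> V \<Longrightarrow> Y \<subseteq> V \<Longrightarrow> f (U \<union> Y) - f Y \<le> (\<Sum>x\<in>U. f (insert x Y) - f Y)"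
proof (induction U rule: finite_induct)
  case (insert x U)
  have "f (insert x (U \<union> Y)) - f (U \<union> Y) \<le> f (insert x Y) - f Y"
    using insert.prems by (intro marginal_antimono) auto
  then show ?case using insert by simp
qed simp

text \<open>Charge each element of Q its marginal value on top of B and the elements of Q charged
  before it; submodularity makes every partial sum a lower bound.\<close>
lemma modular_lower_bound:
  assumes "finite Q" "Q \<subseteq> V" "B \<subseteq> V"
  shows "\<exists>w. (\<forall>x. 0 \<le> w x) \<and> sum w Q = f (B \<union> Q) - f B \<and>
             (\<forall>U. U \<subseteq> Q \<longrightarrow> sum w U \<le> f (B \<union> U) - f B)"
  using assms
proof (induction Q arbitrary: B rule: finite_induct)
  case empty
  show ?case by (rule exI[of _ "\<lambda>_. 0"]) simp
next
  case (insert x Q)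
  obtain w where w: "\<forall>x. 0 \<le> w x" "sum w Q = f (insert x B \<union> Q) - f (insert x B)"
      "\<forall>U. U \<subseteq> Q \<longrightarrow> sum w U \<le> f (insert x B \<union> U) - f (insert x B)"
    using insert.IH[of "insert x B"] insert.prems by auto
  define w' where "w' = w(x := f (insert x B) - f B)"
  have w'_w: "sum w' U = sum w U" if "U \<subseteq> Q" for U
    using that insert.hyps(2) by (intro sum.cong) (auto simp: w'_def)
  have "\<forall>y. 0 \<le> w' y" using w(1) insert.prems by (auto simp: w'_def intro: f_mono)
  moreover have "sum w' (insert x Q) = f (B \<union> insert x Q) - f B"
    using insert.hyps w'_w[of Q] w(2) by (simp add: w'_def)
  moreover have "sum w' U \<le> f (B \<union> U) - f B" if U: "U \<subseteq> insert x Q" for U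
  proof (cases "x \<in> U")
    case True
    have "finite U" using U insert.hyps(1) finite_subset by blast
    then have "sum w' U = (f (insert x B) - f B) + sum w (U - {x})"
      using True U w'_w[of "U - {x}"] by (auto simp: sum.remove w'_def)
    also have "\<dots> \<le> (f (insert x B) - f B) + (f (insert x B \<union> (U - {x})) - f (insert x B))"
      using w(3) U by (intro add_left_mono) blast
    also have "insert x B \<union> (U - {x}) = B \<union> U" using True by auto
    finally show ?thesis by simp
  next
    case False
    then have "U \<subseteq> Q" using U by auto
    then have "sum w' U \<le> f (insert x B \<union> U) - f (insert x B)" using w(3) w'_w by auto
    also have "\<dots> \<le> f (B \<union> U) - f B"
      using insert.prems \<open>U \<subseteq> Q\<close> by (intro marginal_union_antimono) auto
    finally show ?thesis .
  qed
  ultimately show ?case by blast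
qed

lemma alg1_aux_marginal_le_threshold:
  assumes "\<forall>j. i \<le> j \<longrightarrow> j < i + length es \<longrightarrow> alg1_threshold opt k n j = \<tau>" "0 \<le> \<tau>"
    and "finite S" "S \<subseteq> V" "set es \<subseteq> V" "e \<in> set es"
    and "card (alg1_aux f opt k n i es S) < k"
  shows "f (insert e (alg1_aux f opt k n i es S)) - f (alg1_aux f opt k n i es S) \<le> \<tau>"
proof (cases "e \<in> alg1_aux f opt k n i es S")
  case False
  let ?R = "alg1_aux f opt k n i es S"
  obtain T where T: "T \<subseteq> ?R" "\<not> (card T < k \<and> \<tau> \<le> f (insert e T) - f T)"
    using alg1_aux_rejected[OF assms(1,6) False] by blast
  have R: "finite ?R" "?R \<subseteq> V"
    using alg1_aux_subset[of f opt k n i es S] assms(3-5) by (auto intro: finite_subset)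
  have "card T < k" using card_mono[OF R(1) T(1)] assms(7) by linarith
  then have "f (insert e T) - f T < \<tau>" using T(2) by linarith
  moreover have "f (insert e ?R) - f ?R \<le> f (insert e T) - f T"
    using T(1) R(2) assms(5,6) by (intro marginal_antimono) auto
  ultimately show ?thesis by linarith
qed (simp add: insert_absorb assms(2))

end

lemma card_threshold_mult_le_sum:
  assumes "finite A" "\<forall>x\<in>A. 0 \<le> \<phi> x"
  shows "real (card {x\<in>A. t \<le> \<phi> x}) * t \<le> (\<Sum>x\<in>A. \<phi> x)"
proof -
  have "real (card {x\<in>A. t \<le> \<phi> x}) * t = (\<Sum>x\<in>{x\<in>A. t \<le> \<phi> x}. t)" by simp
  also have "\<dots> \<le> (\<Sum>x\<in>{x\<in>A. t \<le> \<phi> x}. \<phi> x)" by (rule sum_mono) auto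
  also have "\<dots> \<le> (\<Sum>x\<in>A. \<phi> x)" using assms by (intro sum_mono2) auto
  finally show ?thesis .
qed

definition tail_fraction :: "nat \<Rightarrow> nat \<Rightarrow> real" where
  "tail_fraction n m = real (n - m) / real n"

definition tail_sum :: "nat \<Rightarrow> ('a \<Rightarrow> real) \<Rightarrow> 'a set \<Rightarrow> 'a list \<Rightarrow> real" where
  "tail_sum m c Q xs = sum c (Q \<inter> set (drop m xs))"

lemma tail_fraction_nonneg: "0 \<le> tail_fraction n m"
  by (simp add: tail_fraction_def)

lemma tail_fraction_pred_le: "tail_fraction (n - 1) m \<le> tail_fraction n m"
proof (cases "m < n")
  case True
  then have "real (n - 1 - m) * real n \<le> real (n - m) * real (n - 1)"
    by (simp add: of_nat_diff algebra_simps)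
  then show ?thesis using True by (simp add: tail_fraction_def divide_simps)
qed (simp add: tail_fraction_def)

lemma tail_fraction_last_tenth:
  assumes "0 < n"
  shows "1/10 \<le> tail_fraction n (9 * n div 10)" "tail_fraction n (9 * n div 10) \<le> 1/10 + 1 / real n"
proof -
  let ?r = "real (n - 9 * n div 10)"
  have "9 * n div 10 * 10 + 9 * n mod 10 = 9 * n" by (rule div_mult_mod_eq)
  moreover have "9 * n mod 10 < 10" by simp
  ultimately have "real n \<le> 10 * ?r" "10 * ?r \<le> real n + 9"
    by (simp_all add: of_nat_diff)
  then have lo: "real n / 10 \<le> ?r" and hi: "?r \<le> (real n + 9) / 10"
    by simp_all
  show "1/10 \<le> tail_fraction n (9 * n div 10)"
    using divide_right_mono[OF lo, of "real n"] assms by (simp add: tail_fraction_def)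
  have "tail_fraction n (9 * n div 10) \<le> ((real n + 9) / 10) / real n"
    unfolding tail_fraction_def using hi by (rule divide_right_mono) simp
  also have "\<dots> \<le> 1/10 + 1 / real n"
    using assms by (simp add: field_simps)
  finally show "tail_fraction n (9 * n div 10) \<le> 1/10 + 1 / real n" .
qed

lemma tail_sum_eq_indicator:
  "finite Q \<Longrightarrow> tail_sum m c Q xs = (\<Sum>u\<in>Q. c u * of_bool (u \<in> set (drop m xs)))"
  by (simp add: tail_sum_def sum.inter_restrict if_distrib)

lemma sum_permutations_of_set_permutes:
  assumes "\<sigma> permutes V"
  shows "(\<Sum>xs\<in>permutations_of_set V. G (set (drop m xs))) =
         (\<Sum>xs\<in>permutations_of_set V. G (\<sigma> ` set (drop m xs)))"
proof -
  have "inj_on (map \<sigma>) (permutations_of_set V)"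
    using permutes_inj[OF assms] by (auto intro: inj_on_subset[OF inj_mapI])
  then have "(\<Sum>xs\<in>map \<sigma> ` permutations_of_set V. G (set (drop m xs))) =
        (\<Sum>xs\<in>permutations_of_set V. G (\<sigma> ` set (drop m xs)))"
    by (simp add: sum.reindex drop_map)
  then show ?thesis by (simp add: permutations_of_set_image_permutes[OF assms])
qed

lemma card_set_drop_permutation:
  "xs \<in> permutations_of_set V \<Longrightarrow> card (set (drop m xs)) = card V - m"
  by (metis distinct_card distinct_drop length_drop length_finite_permutations_of_set
      permutations_of_setD(2))

lemma set_drop_permutation_subset: "xs \<in> permutations_of_set V \<Longrightarrow> set (drop m xs) \<subseteq> V"
  by (metis permutations_of_setD(1) set_drop_subset)

lemma tail_member_count:
  assumes "finite V" "e \<in> V"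
  shows "(\<Sum>xs\<in>permutations_of_set V. of_bool (e \<in> set (drop m xs))) =
           real (card (permutations_of_set V)) * tail_fraction (card V) m"
proof -
  have card_V: "0 < card V" using assms card_gt_0_iff by blast
  let ?P = "permutations_of_set V"
  have swap: "(\<Sum>xs\<in>?P. of_bool (e \<in> set (drop m xs))) = (\<Sum>xs\<in>?P. of_bool (e' \<in> set (drop m xs)) :: real)"
    if "e' \<in> V" for e'
    using sum_permutations_of_set_permutes[OF permutes_swap_id[OF assms(2) that],
        of "\<lambda>X. of_bool (e \<in> X)" m]
    by (simp add: in_transpose_image_iff del: sum_of_bool_eq)
  have "(\<Sum>e'\<in>V. \<Sum>xs\<in>?P. of_bool (e' \<in> set (drop m xs))) =
        (\<Sum>e'\<in>V. \<Sum>xs\<in>?P. of_bool (e \<in> set (drop m xs)) :: real)"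
    by (rule sum.cong[OF refl], rule sym, erule swap)
  then have "real (card V) * (\<Sum>xs\<in>?P. of_bool (e \<in> set (drop m xs))) =
        (\<Sum>e'\<in>V. \<Sum>xs\<in>?P. of_bool (e' \<in> set (drop m xs)))"
    by (simp del: sum_of_bool_eq)
  also have "\<dots> = (\<Sum>xs\<in>?P. real (card (V \<inter> set (drop m xs))))"
    using assms(1) by (subst sum.swap) simp
  also have "\<dots> = real (card ?P) * real (card V - m)"
    by (simp add: Int_absorb1 set_drop_permutation_subset card_set_drop_permutation)
  finally show ?thesis using card_V by (simp add: tail_fraction_def field_simps)
qed

lemma tail_pair_count:
  assumes "finite V" "e \<in> V" "e' \<in> V" "e \<noteq> e'"
  shows "(\<Sum>xs\<in>permutations_of_set V. of_bool (e \<in> set (drop m xs) \<and> e' \<in> set (drop m xs))) =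
           real (card (permutations_of_set V)) * tail_fraction (card V) m * tail_fraction (card V - 1) m"
proof -
  have card_V: "1 < card V"
    using card_mono[OF assms(1), of "{e, e'}"] assms by simp
  let ?P = "permutations_of_set V"
  have swap: "(\<Sum>xs\<in>?P. of_bool (e \<in> set (drop m xs) \<and> e' \<in> set (drop m xs))) =
              (\<Sum>xs\<in>?P. of_bool (e \<in> set (drop m xs) \<and> e'' \<in> set (drop m xs)) :: real)"
    if "e'' \<in> V - {e}" for e''
  proof -
    have "Transposition.transpose e' e'' e = e" using that assms by (auto intro: transpose_apply_other)
    then show ?thesis using sum_permutations_of_set_permutes[OF permutes_swap_id[of e' V e''],
        of "\<lambda>X. of_bool (e \<in> X \<and> e' \<in> X)" m] that assms
      by (simp add: in_transpose_image_iff del: sum_of_bool_eq)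
  qed
  have "(\<Sum>e''\<in>V - {e}. \<Sum>xs\<in>?P. of_bool (e \<in> set (drop m xs) \<and> e'' \<in> set (drop m xs))) =
        (\<Sum>e''\<in>V - {e}. \<Sum>xs\<in>?P. of_bool (e \<in> set (drop m xs) \<and> e' \<in> set (drop m xs)) :: real)"
    by (rule sum.cong[OF refl], rule sym, erule swap)
  then have "real (card V - 1) * (\<Sum>xs\<in>?P. of_bool (e \<in> set (drop m xs) \<and> e' \<in> set (drop m xs))) =
        (\<Sum>e''\<in>V - {e}. \<Sum>xs\<in>?P. of_bool (e \<in> set (drop m xs) \<and> e'' \<in> set (drop m xs)))"
    using assms by (simp del: sum_of_bool_eq)
  also have "\<dots> = (\<Sum>xs\<in>?P. of_bool (e \<in> set (drop m xs)) * real (card ((V - {e}) \<inter> set (drop m xs))))"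
  proof (subst sum.swap, rule sum.cong[OF refl])
    fix xs
    show "(\<Sum>e''\<in>V - {e}. of_bool (e \<in> set (drop m xs) \<and> e'' \<in> set (drop m xs))) =
          of_bool (e \<in> set (drop m xs)) * real (card ((V - {e}) \<inter> set (drop m xs)))"
      using assms(1) by (cases "e \<in> set (drop m xs)") simp_all
  qed
  also have "\<dots> = (\<Sum>xs\<in>?P. of_bool (e \<in> set (drop m xs))) * real (card V - m - 1)"
  proof -
    have "of_bool (e \<in> set (drop m xs)) * real (card ((V - {e}) \<inter> set (drop m xs))) =
          of_bool (e \<in> set (drop m xs)) * real (card V - m - 1)" if "xs \<in> ?P" for xs
    proof (cases "e \<in> set (drop m xs)")
      case True
      then have "card ((V - {e}) \<inter> set (drop m xs)) = card (set (drop m xs)) - 1"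
        using set_drop_permutation_subset[OF that] by (simp add: Int_absorb1 Diff_Int_distrib2 flip: Int_Diff)
      then show ?thesis using card_set_drop_permutation[OF that] by simp
    qed simp
    then have "(\<Sum>xs\<in>?P. of_bool (e \<in> set (drop m xs)) * real (card ((V - {e}) \<inter> set (drop m xs)))) =
          (\<Sum>xs\<in>?P. of_bool (e \<in> set (drop m xs)) * real (card V - m - 1))"
      by (rule sum.cong[OF refl])
    then show ?thesis
      by (simp add: sum_distrib_right del: sum_of_bool_eq sum_of_bool_mult_eq)
  qed
  finally show ?thesis
    using tail_member_count[OF assms(1,2)] card_V by (simp add: tail_fraction_def field_simps)
qed

lemma sum_tail_sum:
  assumes "finite V" "Q \<subseteq> V"
  shows "(\<Sum>xs\<in>permutations_of_set V. tail_sum m c Q xs) =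
           real (card (permutations_of_set V)) * tail_fraction (card V) m * sum c Q"
proof -
  let ?P = "permutations_of_set V"
  have "finite Q" using assms finite_subset by blast
  then have "(\<Sum>xs\<in>?P. tail_sum m c Q xs) = (\<Sum>u\<in>Q. c u * (\<Sum>xs\<in>?P. of_bool (u \<in> set (drop m xs))))"
    by (simp only: tail_sum_eq_indicator sum_distrib_left sum.swap[of _ ?P])
  also have "\<dots> = (\<Sum>u\<in>Q. c u * (real (card ?P) * tail_fraction (card V) m))"
    using assms by (intro sum.cong refl) (auto simp only: tail_member_count)
  finally show ?thesis by (simp add: sum_distrib_right mult_ac)
qed

lemma sum_tail_sum_squared:
  fixes m :: nat and c :: "'a \<Rightarrow> real"
  assumes "finite V" "Q \<subseteq> V"
  defines "p \<equiv> tail_fraction (card V) m" and "r \<equiv> tail_fraction (card V) m * tail_fraction (card V - 1) m"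
  shows "(\<Sum>xs\<in>permutations_of_set V. (tail_sum m c Q xs)^2) =
           real (card (permutations_of_set V)) * (p * (\<Sum>u\<in>Q. (c u)^2) + r * ((sum c Q)^2 - (\<Sum>u\<in>Q. (c u)^2)))"
proof -
  let ?P = "permutations_of_set V" and ?N = "real (card (permutations_of_set V))"
  have fQ: "finite Q" using assms finite_subset by blast
  define I where "I xs u = (of_bool (u \<in> set (drop m xs)) :: real)" for xs :: "'a list" and u
  have sq: "(tail_sum m c Q xs)^2 = (\<Sum>u\<in>Q. \<Sum>u'\<in>Q. c u * c u' * (I xs u * I xs u'))" for xs
    unfolding tail_sum_eq_indicator[OF fQ] power2_eq_square sum_product I_def
    by (intro sum.cong refl) (simp add: algebra_simps)
  have pair: "(\<Sum>xs\<in>?P. I xs u * I xs u') = (if u = u' then ?N * p else ?N * r)"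
    if "u \<in> Q" "u' \<in> Q" for u u'
  proof -
    have uV: "u \<in> V" "u' \<in> V" using that assms(2) by auto
    have "(\<Sum>xs\<in>?P. I xs u * I xs u') = (\<Sum>xs\<in>?P. of_bool (u \<in> set (drop m xs) \<and> u' \<in> set (drop m xs)))"
      by (simp only: I_def of_bool_conj)
    then show ?thesis
      using tail_member_count[OF assms(1) uV(1), of m] tail_pair_count[OF assms(1) uV, of m]
      by (cases "u = u'") (simp_all add: p_def r_def mult.assoc del: sum_of_bool_eq)
  qed
  have "(\<Sum>xs\<in>?P. (tail_sum m c Q xs)^2) = (\<Sum>u\<in>Q. \<Sum>u'\<in>Q. c u * c u' * (\<Sum>xs\<in>?P. I xs u * I xs u'))"
    unfolding sq by (simp add: sum.swap[of _ ?P] sum_distrib_left)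
  also have "\<dots> = (\<Sum>u\<in>Q. \<Sum>u'\<in>Q. c u * c u' * (if u = u' then ?N * p else ?N * r))"
    using pair by (intro sum.cong refl) auto
  also have "\<dots> = (\<Sum>u\<in>Q. c u * (c u * ?N * p + ?N * r * (sum c Q - c u)))"
  proof (intro sum.cong refl)
    fix u assume u: "u \<in> Q"
    have "(\<Sum>u'\<in>Q. c u * c u' * (if u = u' then ?N * p else ?N * r)) =
          c u * c u * (?N * p) + (\<Sum>u'\<in>Q - {u}. c u * c u' * (?N * r))"
    proof -
      have "(\<Sum>u'\<in>Q - {u}. c u * c u' * (if u = u' then ?N * p else ?N * r)) =
            (\<Sum>u'\<in>Q - {u}. c u * c u' * (?N * r))"
        by (intro sum.cong) auto
      then show ?thesis using u fQ by (simp add: sum.remove)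
    qed
    also have "(\<Sum>u'\<in>Q - {u}. c u * c u' * (?N * r)) = c u * ?N * r * (sum c Q - c u)"
    proof -
      have "(\<Sum>u'\<in>Q - {u}. c u * c u' * (?N * r)) = c u * ?N * r * (\<Sum>u'\<in>Q - {u}. c u')"
        by (simp add: sum_distrib_left algebra_simps)
      then show ?thesis using u fQ by (simp add: sum_diff1)
    qed
    finally show "(\<Sum>u'\<in>Q. c u * c u' * (if u = u' then ?N * p else ?N * r)) =
          c u * (c u * ?N * p + ?N * r * (sum c Q - c u))" by (simp add: algebra_simps)
  qed
  also have "\<dots> = ?N * (p * (\<Sum>u\<in>Q. (c u)^2) + r * ((sum c Q)^2 - (\<Sum>u\<in>Q. (c u)^2)))"
    by (simp add: algebra_simps power2_eq_square sum.distrib sum_subtractf sum_distrib_left sum_distrib_right)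
  finally show ?thesis .
qed

lemma sum_tail_sum_deviation_squared_le:
  fixes m :: nat and c :: "'a \<Rightarrow> real"
  assumes "finite V" "Q \<subseteq> V"
  defines "p \<equiv> tail_fraction (card V) m"
  shows "(\<Sum>xs\<in>permutations_of_set V. (tail_sum m c Q xs - p * sum c Q)^2) \<le>
           real (card (permutations_of_set V)) * p * (\<Sum>u\<in>Q. (c u)^2)"
proof -
  let ?P = "permutations_of_set V" and ?N = "real (card (permutations_of_set V))"
  define r where "r = p * tail_fraction (card V - 1) m"
  define S1 where "S1 = sum c Q"
  define S2 where "S2 = (\<Sum>u\<in>Q. (c u)^2)"
  have "(\<Sum>xs\<in>?P. (tail_sum m c Q xs - p * S1)^2) =
        (\<Sum>xs\<in>?P. (tail_sum m c Q xs)^2) - 2 * (p * S1) * (\<Sum>xs\<in>?P. tail_sum m c Q xs) + ?N * (p * S1)^2"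
    by (simp add: power2_diff sum.distrib sum_subtractf sum_distrib_left mult_ac)
  also have "\<dots> = ?N * (p * S2 + (r - p * p) * S1^2 - r * S2)"
    using sum_tail_sum_squared[OF assms(1,2), of m c] sum_tail_sum[OF assms(1,2), of m c]
    unfolding p_def r_def S1_def S2_def by (simp add: algebra_simps power2_eq_square)
  also have "\<dots> \<le> ?N * (p * S2)"
  proof -
    have "r \<le> p * p" "0 \<le> r"
      unfolding r_def p_def
      using tail_fraction_pred_le[of "card V" m] tail_fraction_nonneg[of "card V" m]
        tail_fraction_nonneg[of "card V - 1" m]
      by (auto intro: mult_left_mono)
    moreover have "0 \<le> S2" unfolding S2_def by (simp add: sum_nonneg)
    ultimately have "(r - p * p) * S1^2 \<le> 0" "0 \<le> r * S2"
      by (simp_all add: mult_nonpos_nonneg)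
    then show ?thesis by (intro mult_left_mono) auto

  qed
  finally show ?thesis unfolding S1_def S2_def by (simp add: mult.assoc)
qed

lemma card_tail_sum_below_le:
  fixes m :: nat and c :: "'a \<Rightarrow> real"
  assumes "finite V" "Q \<subseteq> V" "0 < t"
  defines "p \<equiv> tail_fraction (card V) m"
  shows "real (card {xs\<in>permutations_of_set V. tail_sum m c Q xs < p * sum c Q - t}) * t^2 \<le>
           real (card (permutations_of_set V)) * p * (\<Sum>u\<in>Q. (c u)^2)"
proof -
  let ?P = "permutations_of_set V"
  let ?\<phi> = "\<lambda>xs. (tail_sum m c Q xs - p * sum c Q)^2"
  have "{xs\<in>?P. tail_sum m c Q xs < p * sum c Q - t} \<subseteq> {xs\<in>?P. t^2 \<le> ?\<phi> xs}"
  proof (intro subsetI CollectI conjI)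
    fix xs assume "xs \<in> {xs\<in>?P. tail_sum m c Q xs < p * sum c Q - t}"
    then have "xs \<in> ?P" "t \<le> \<bar>tail_sum m c Q xs - p * sum c Q\<bar>" by auto
    then show "xs \<in> ?P" "t^2 \<le> ?\<phi> xs"
      using assms(3) power_mono[of t "\<bar>tail_sum m c Q xs - p * sum c Q\<bar>" 2] by auto
  qed
  then have "real (card {xs\<in>?P. tail_sum m c Q xs < p * sum c Q - t}) * t^2 \<le>
             real (card {xs\<in>?P. t^2 \<le> ?\<phi> xs}) * t^2"
    using assms(1) by (intro mult_right_mono) (auto intro: card_mono)
  also have "\<dots> \<le> (\<Sum>xs\<in>?P. ?\<phi> xs)"
    using assms(1) by (intro card_threshold_mult_le_sum) auto
  also have "\<dots> \<le> real (card ?P) * p * (\<Sum>u\<in>Q. (c u)^2)"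
    unfolding p_def by (rule sum_tail_sum_deviation_squared_le[OF assms(1,2)])
  finally show ?thesis .
qed

locale algorithm1_run = monotone_submodular +
  fixes k :: nat and W :: real and xs :: "'a list"
  assumes finite_V: "finite V" and k_pos: "0 < k" and W_pos: "0 < W" and f_empty: "f {} = 0"
    and W_bound: "\<And>S. S \<subseteq> V \<Longrightarrow> card S \<le> k \<Longrightarrow> f S \<le> W"
    and xs_perm: "xs \<in> permutations_of_set V"
begin

abbreviation "cutoff \<equiv> 9 * card V div 10"
abbreviation "head \<equiv> set (take cutoff xs)"
abbreviation "tail \<equiv> set (drop cutoff xs)"
abbreviation "\<tau>\<^sub>1 \<equiv> 100 / real k * W"
abbreviation "\<tau>\<^sub>2 \<equiv> 1 / (10 * real k) * W"
abbreviation "first_phase \<equiv> alg1_aux f W k (card V) 1 (take cutoff xs) {}"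
abbreviation "output \<equiv> algorithm1 f W k xs"

lemma head_union_tail: "head \<union> tail = V"
  using permutations_of_setD(1)[OF xs_perm] by (metis set_append append_take_drop_id)

lemma head_inter_tail: "head \<inter> tail = {}"
  using permutations_of_setD(2)[OF xs_perm] by (metis append_take_drop_id distinct_append)

lemma output_eq: "output = alg1_aux f W k (card V) (Suc cutoff) (drop cutoff xs) first_phase"
proof -
  have "length xs = card V" "length (take cutoff xs) = cutoff"
    using length_finite_permutations_of_set[OF xs_perm] by simp_all
  then show ?thesis
    unfolding algorithm1_def by (metis alg1_aux_append append_take_drop_id plus_1_eq_Suc)
qed

lemma threshold_head: "\<forall>j. 1 \<le> j \<longrightarrow> j < 1 + length (take cutoff xs) \<longrightarrow> alg1_threshold W k (card V) j = \<tau>\<^sub>1"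
proof (intro allI impI)
  fix j assume "j < 1 + length (take cutoff xs)"
  then show "alg1_threshold W k (card V) j = \<tau>\<^sub>1" by (intro alg1_threshold_head) simp
qed

lemma threshold_tail:
  "\<forall>j. Suc cutoff \<le> j \<longrightarrow> j < Suc cutoff + length (drop cutoff xs) \<longrightarrow> alg1_threshold W k (card V) j = \<tau>\<^sub>2"
proof (intro allI impI)
  fix j assume "Suc cutoff \<le> j"
  then show "alg1_threshold W k (card V) j = \<tau>\<^sub>2" by (intro alg1_threshold_tail) simp
qed

lemma first_phase_subset: "first_phase \<subseteq> head"
  using alg1_aux_subset[of f W k "card V" 1 "take cutoff xs" "{}"] by simp

lemma first_phase_subset_output: "first_phase \<subseteq> output"
  unfolding output_eq by (rule alg1_aux_superset)

lemma output_subset: "output \<subseteq> V"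
  using algorithm1_subset[of f W k xs] permutations_of_setD(1)[OF xs_perm] by simp

lemma first_phase_card: "finite first_phase" "card first_phase \<le> k"
  using alg1_aux_card_le[of "{}" k f W "card V" 1 "take cutoff xs"] by simp_all

lemma output_card: "finite output" "card output \<le> k"
  using alg1_aux_card_le[OF first_phase_card] unfolding output_eq by simp_all

text \<open>Every element taken in the first phase gains 100 W / k, and f stays below W.\<close>
lemma first_phase_small: "real (card first_phase) * 100 \<le> real k"
proof -
  have "real (card first_phase) * \<tau>\<^sub>1 \<le> f first_phase"
    using alg1_aux_gain[OF threshold_head, where S="{}" and f=f] W_pos k_pos f_empty by simp
  also have "\<dots> \<le> W"
    using W_bound first_phase_subset first_phase_card head_union_tail by blast
  finally show ?thesis using W_pos k_pos by (simp add: field_simps)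
qed

lemma head_marginal_first_phase:
  assumes "e \<in> head"
  shows "f (insert e first_phase) - f first_phase \<le> \<tau>\<^sub>1"
proof -
  have "real (card first_phase) < real k" using first_phase_small k_pos by linarith
  then have "card first_phase < k" by simp
  moreover have "head \<subseteq> V" using head_union_tail by blast
  ultimately show ?thesis
    using alg1_aux_marginal_le_threshold[OF threshold_head, where S="{}" and e=e] assms W_pos k_pos
    by simp
qed

lemma head_marginal_output:
  assumes "e \<in> head"
  shows "f (insert e output) - f output \<le> \<tau>\<^sub>1"
proof -
  have "e \<in> V" using assms head_union_tail by blast
  then show ?thesis
    using marginal_antimono[OF first_phase_subset_output output_subset] head_marginal_first_phase[OF assms]
    by (meson order_trans)
qed

lemma tail_marginal_output:
  assumes "card output < k" "e \<in> tail"
  shows "f (insert e output) - f output \<le> \<tau>\<^sub>2"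
  using alg1_aux_marginal_le_threshold[OF threshold_tail, where S=first_phase and e=e]
    assms first_phase_card first_phase_subset head_union_tail W_pos k_pos
  unfolding output_eq by auto

lemma output_value_full:
  assumes "card output = k" "A \<subseteq> head"
  shows "f A - real (card A) * \<tau>\<^sub>1 + 99/1000 * W \<le> f output"
proof -
  have fin_A: "finite A" using assms(2) finite_subset by blast
  have A_V: "A \<subseteq> V" and first_V: "first_phase \<subseteq> V"
    using assms(2) first_phase_subset head_union_tail by auto
  have "f A \<le> f (A \<union> first_phase)" using A_V first_V by (intro f_mono) auto
  also have "\<dots> \<le> f first_phase + (\<Sum>x\<in>A. f (insert x first_phase) - f first_phase)"
    using marginal_le_sum_marginals[OF fin_A A_V first_V] by simp
  also have "\<dots> \<le> f first_phase + real (card A) * \<tau>\<^sub>1"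
    using head_marginal_first_phase assms(2) by (intro add_left_mono sum_bounded_above) auto
  finally have "f A - real (card A) * \<tau>\<^sub>1 \<le> f first_phase" by simp
  moreover have "(real (card output) - real (card first_phase)) * \<tau>\<^sub>2 \<le> f output - f first_phase"
    using alg1_aux_gain[OF threshold_tail, where S=first_phase and f=f] first_phase_card W_pos k_pos
    unfolding output_eq by simp
  moreover have "99/1000 * W \<le> (real (card output) - real (card first_phase)) * \<tau>\<^sub>2"
  proof -
    have "99/100 * real k \<le> real (card output) - real (card first_phase)"
      using assms(1) first_phase_small by simp
    from mult_right_mono[OF this, of "\<tau>\<^sub>2"] show ?thesis
      using W_pos k_pos by simp
  qed
  ultimately show ?thesis by linarith
qed

lemma output_value_not_full:
  assumes "card output < k" "U \<subseteq> V"
  shows "f U \<le> f output + real (card (U \<inter> head)) * \<tau>\<^sub>1 + real (card (U \<inter> tail)) * \<tau>\<^sub>2"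
proof -
  have fin_U: "finite U" using assms(2) finite_V finite_subset by blast
  have U: "U = (U \<inter> head) \<union> (U \<inter> tail)" using assms(2) head_union_tail by blast
  have "f U \<le> f (U \<union> output)" using assms(2) output_subset by (intro f_mono) auto
  also have "\<dots> \<le> f output + (\<Sum>x\<in>U. f (insert x output) - f output)"
    using marginal_le_sum_marginals[OF fin_U assms(2) output_subset] by simp
  also have "(\<Sum>x\<in>U. f (insert x output) - f output) =
      (\<Sum>x\<in>U \<inter> head. f (insert x output) - f output) + (\<Sum>x\<in>U \<inter> tail. f (insert x output) - f output)"
    using fin_U head_inter_tail by (subst U, intro sum.union_disjoint) auto
  also have "\<dots> \<le> real (card (U \<inter> head)) * \<tau>\<^sub>1 + real (card (U \<inter> tail)) * \<tau>\<^sub>2"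
    using head_marginal_output tail_marginal_output[OF assms(1)]
    by (intro add_mono sum_bounded_above) auto
  finally show ?thesis by simp
qed

end

lemma square_diff_le:
  fixes x \<theta> t :: real
  assumes "0 \<le> x" "x \<le> \<theta>" "0 \<le> t"
  shows "(x - t)^2 \<le> x * \<theta> + t^2"
proof (cases "t \<le> x")
  case True
  then have "(x - t)^2 \<le> x^2" using assms by (intro power_mono) auto
  also have "\<dots> \<le> x * \<theta>" using assms by (simp add: power2_eq_square mult_left_mono)
  finally show ?thesis using zero_le_power2[of t] by linarith
next
  case False
  then have "(t - x)^2 \<le> t^2" using assms by (intro power_mono) auto
  moreover have "(x - t)^2 = (t - x)^2" by (rule power2_commute)
  moreover have "0 \<le> x * \<theta>" using assms by simp
  ultimately show ?thesis by linarith
qed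

lemma OPT_upper: "finite V \<Longrightarrow> S \<subseteq> V \<Longrightarrow> card S \<le> k \<Longrightarrow> f S \<le> OPT V f k"
  unfolding OPT_def by (rule Max_ge) auto

lemma OPT_attained:
  assumes "finite V"
  shows "\<exists>S. S \<subseteq> V \<and> card S \<le> k \<and> f S = OPT V f k"
proof -
  have "OPT V f k \<in> f ` {S. S \<subseteq> V \<and> card S \<le> k}"
    unfolding OPT_def using assms by (intro Max_in) auto
  then show ?thesis by auto
qed

lemma prob_pmf_of_set_ge:
  assumes "finite P" "P \<noteq> {}" "F1 \<subseteq> P" "F2 \<subseteq> P" "P - F1 - F2 \<subseteq> G"
    and "real (card F1) \<le> a * real (card P)" "real (card F2) \<le> b * real (card P)"
  shows "1 - a - b \<le> measure_pmf.prob (pmf_of_set P) G"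
proof -
  have "P \<subseteq> (P \<inter> G) \<union> F1 \<union> F2" using assms(5) by blast
  then have "card P \<le> card ((P \<inter> G) \<union> F1 \<union> F2)"
    using assms(1,3,4) by (auto intro: card_mono finite_subset)
  also have "\<dots> \<le> card (P \<inter> G) + card F1 + card F2"
    by (meson card_Un_le add_right_mono order_trans)
  finally have "(1 - a - b) * real (card P) \<le> real (card (P \<inter> G))"
    using assms(6,7) by (simp add: algebra_simps)
  moreover have "0 < card P" using assms(1,2) card_gt_0_iff by blast
  ultimately show ?thesis using assms(1,2) by (simp add: measure_pmf_of_set field_simps)
qed

locale dense_instance = monotone_submodular +
  fixes k :: nat and W :: real and D Sopt :: "'a set" and h g :: "'a \<Rightarrow> real"
  assumes finite_V: "finite V" and k_large: "200000000 \<le> real k" and k_le: "k \<le> card V"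
    and f_empty: "f {} = 0" and W_pos: "0 < W"
    and W_bound: "\<And>S. S \<subseteq> V \<Longrightarrow> card S \<le> k \<Longrightarrow> f S \<le> W"
    and D_subset: "D \<subseteq> V" and D_card: "real (card D) \<le> 5/100000 * real k"
    and D_value: "495/1000 * W \<le> f D"
    and Sopt_subset: "Sopt \<subseteq> V" and Sopt_card: "card Sopt \<le> k" and Sopt_value: "f Sopt = W"
    and h_nonneg: "\<And>x. 0 \<le> h x" and h_sum: "sum h D = f D"
    and h_le: "\<And>U. U \<subseteq> D \<Longrightarrow> sum h U \<le> f U"
    and g_nonneg: "\<And>x. 0 \<le> g x" and g_sum: "sum g (Sopt - D) = f (D \<union> (Sopt - D)) - f D"
    and g_le: "\<And>U. U \<subseteq> Sopt - D \<Longrightarrow> sum g U \<le> f (D \<union> U) - f D"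
begin

abbreviation "Q \<equiv> Sopt - D"
abbreviation "heavy \<equiv> {x\<in>Q. 10000 * W / real k \<le> g x}"
abbreviation "light \<equiv> Q - heavy"
abbreviation "excess \<equiv> \<lambda>x. g x - 1 / (10 * real k) * W"
abbreviation "p \<equiv> tail_fraction (card V) (9 * card V div 10)"
abbreviation "bad_dense \<equiv>
  {xs\<in>permutations_of_set V. f D - 41/100 * W < tail_sum (9 * card V div 10) h D xs}"
abbreviation "bad_light \<equiv> {xs\<in>permutations_of_set V.
  tail_sum (9 * card V div 10) excess light xs < p * sum excess light - W/100}"

lemma algorithm1_run_permutation: "xs \<in> permutations_of_set V \<Longrightarrow> algorithm1_run V f k W xs"
  using k_large by unfold_locales (auto intro: W_bound W_pos f_empty finite_V)

lemma k_pos: "0 < k" using k_large by simp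

lemma Q_subset: "Q \<subseteq> V"
  using Sopt_subset by blast

lemma finite_Q: "finite Q"
  using Q_subset finite_V finite_subset by blast

lemma card_Q: "card Q \<le> k"
  using card_mono[OF finite_subset[OF Sopt_subset finite_V], of Q] Sopt_card by auto

lemma sum_g_le: "sum g Q \<le> W"
proof -
  have "f (D \<union> Q) - f D \<le> f ({} \<union> Q) - f {}"
    using D_subset Q_subset by (intro marginal_union_antimono) auto
  then show ?thesis using g_sum f_empty W_bound[OF Q_subset card_Q] by simp
qed

lemma sum_g_ge: "W - f D \<le> sum g Q"
proof -
  have "D \<union> Q = D \<union> Sopt" by auto
  moreover have "f Sopt \<le> f (D \<union> Sopt)" using D_subset Sopt_subset by (intro f_mono) auto
  ultimately show ?thesis using g_sum Sopt_value by simp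
qed

lemma card_heavy: "real (card heavy) * 10000 \<le> real k"
proof -
  have "real (card heavy) * (10000 * W / real k) \<le> sum g Q"
    using card_threshold_mult_le_sum[OF finite_Q, of g "10000 * W / real k"] g_nonneg by simp
  also have "\<dots> \<le> W" by (rule sum_g_le)
  finally have "(real (card heavy) * 10000) * W \<le> real k * W"
    using k_pos by (simp add: field_simps)
  then show ?thesis using W_pos by simp
qed

lemma p_bounds: "1/10 \<le> p" "p \<le> 1/10 + 1/200000000"
proof -
  have "200000000 \<le> real (card V)" using k_large k_le by linarith
  then have n: "0 < card V" and "1 / real (card V) \<le> 1/200000000"
    by (simp_all add: field_simps)
  then show "1/10 \<le> p" "p \<le> 1/10 + 1/200000000"
    using tail_fraction_last_tenth[OF n] by linarith+
qed

lemma good_output_if_full: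
  assumes xs: "xs \<in> permutations_of_set V" "xs \<notin> bad_dense"
    and full: "card (algorithm1 f W k xs) = k"
  shows "50025/100000 * W \<le> f (algorithm1 f W k xs)"
proof -
  interpret run: algorithm1_run V f k W xs by (rule algorithm1_run_permutation[OF xs(1)])
  let ?A = "D \<inter> run.head"
  have fin_D: "finite D" using D_subset finite_V finite_subset by blast
  have "sum h D = sum h ?A + tail_sum run.cutoff h D xs"
    unfolding tail_sum_def using fin_D run.head_inter_tail run.head_union_tail D_subset
    by (subst sum.union_disjoint[symmetric]) (auto intro: sum.cong)
  then have "41/100 * W \<le> f ?A"
    using xs h_sum h_le[of ?A] by auto
  moreover have "real (card ?A) * run.\<tau>\<^sub>1 \<le> 5/1000 * W"
  proof -
    have "real (card ?A) \<le> 5/100000 * real k"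
      using card_mono[OF fin_D, of ?A] D_card by auto
    from mult_right_mono[OF this, of "run.\<tau>\<^sub>1"] show ?thesis using W_pos k_pos by simp
  qed
  ultimately show ?thesis using run.output_value_full[OF full, of ?A] W_pos by auto
qed

lemma good_output_if_not_full:
  assumes xs: "xs \<in> permutations_of_set V" "xs \<notin> bad_light"
    and not_full: "card (algorithm1 f W k xs) < k"
  shows "50025/100000 * W \<le> f (algorithm1 f W k xs)"
proof -
  interpret run: algorithm1_run V f k W xs by (rule algorithm1_run_permutation[OF xs(1)])
  define R where "R = light \<inter> run.tail"
  define U where "U = D \<union> heavy \<union> R"
  define A where "A = real (card D) + real (card heavy)"
  have fin: "finite D" "finite heavy" "finite R"
    using D_subset finite_V finite_Q by (auto simp: R_def intro: finite_subset)
  have U_V: "U \<subseteq> V" using D_subset Q_subset by (auto simp: U_def R_def)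
  have \<tau>: "0 \<le> run.\<tau>\<^sub>1" "0 \<le> run.\<tau>\<^sub>2" using W_pos k_pos by auto
  have hd: "real (card (U \<inter> run.head)) \<le> A"
  proof -
    have "U \<inter> run.head \<subseteq> D \<union> heavy" using run.head_inter_tail by (auto simp: U_def R_def)
    then have "card (U \<inter> run.head) \<le> card (D \<union> heavy)" using fin by (intro card_mono) auto
    then show ?thesis using card_Un_le[of D heavy] unfolding A_def by linarith
  qed
  moreover have tl: "real (card (U \<inter> run.tail)) \<le> A + real (card R)"
  proof -
    have "card (U \<inter> run.tail) \<le> card U" using fin by (intro card_mono) (auto simp: U_def)
    then show ?thesis
      using card_Un_le[of D heavy] card_Un_le[of "D \<union> heavy" R] unfolding A_def U_def by linarith
  qed
  have "f U \<le> f (algorithm1 f W k xs) + A * run.\<tau>\<^sub>1 + (A + real (card R)) * run.\<tau>\<^sub>2"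
    using run.output_value_not_full[OF not_full U_V] mult_right_mono[OF hd \<tau>(1)]
      mult_right_mono[OF tl \<tau>(2)]
    by linarith
  moreover have "f D + sum g heavy + sum g R \<le> f U"
  proof -
    have "sum g heavy + sum g R = sum g (heavy \<union> R)"
      using fin by (intro sum.union_disjoint[symmetric]) (auto simp: R_def)
    also have "\<dots> \<le> f (D \<union> (heavy \<union> R)) - f D" by (rule g_le) (auto simp: R_def)
    also have "D \<union> (heavy \<union> R) = U" by (auto simp: U_def)
    finally show ?thesis by simp
  qed
  moreover have "tail_sum run.cutoff excess light xs = sum g R - real (card R) * run.\<tau>\<^sub>2"
    by (simp add: tail_sum_def R_def sum_subtractf)
  ultimately have key: "f D + sum g heavy + tail_sum run.cutoff excess light xs
      - A * (run.\<tau>\<^sub>1 + run.\<tau>\<^sub>2) \<le> f (algorithm1 f W k xs)"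
    unfolding distrib_left distrib_right by linarith
  have "p * sum excess light - W/100 \<le> tail_sum run.cutoff excess light xs" using xs by auto
  moreover have "p * sum excess light = p * sum g light - p * (real (card light) * run.\<tau>\<^sub>2)"
    by (simp add: sum_subtractf right_diff_distrib)
  moreover have "sum g light / 10 \<le> p * sum g light"
    using p_bounds g_nonneg by (simp add: sum_nonneg mult_right_mono[of "1/10" p, simplified])
  moreover have "p * (real (card light) * run.\<tau>\<^sub>2) \<le> W/100 + W/2000000000"
  proof -
    have "real (card light) * run.\<tau>\<^sub>2 \<le> W / 10"
      using card_mono[OF finite_Q, of light] card_Q W_pos k_pos by (simp add: field_simps)
    then have "p * (real (card light) * run.\<tau>\<^sub>2) \<le> (1/10 + 1/200000000) * (W / 10)"
      using p_bounds tail_fraction_nonneg W_pos by (intro mult_mono) auto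
    then show ?thesis by simp
  qed
  moreover have "A * (run.\<tau>\<^sub>1 + run.\<tau>\<^sub>2) \<le> 15015/1000000 * W"
  proof -
    have "A \<le> 15/100000 * real k" using D_card card_heavy unfolding A_def by simp
    from mult_right_mono[OF this, of "run.\<tau>\<^sub>1 + run.\<tau>\<^sub>2"] show ?thesis
      using W_pos k_pos by (simp add: field_simps)
  qed
  moreover have "sum g Q = sum g light + sum g heavy"
    by (rule sum.subset_diff) (use finite_Q in auto)
  moreover have "0 \<le> sum g heavy" using g_nonneg by (simp add: sum_nonneg)
  ultimately show ?thesis using key sum_g_ge D_value W_pos by linarith
qed

lemma good_permutation:
  assumes "xs \<in> permutations_of_set V - bad_dense - bad_light"
  shows "50025/100000 * W \<le> f (algorithm1 f W k xs)"
proof -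
  interpret run: algorithm1_run V f k W xs using assms by (intro algorithm1_run_permutation) auto
  show ?thesis
    using run.output_card(2) good_output_if_full good_output_if_not_full assms by (cases "card run.output = k") auto
qed

lemma card_bad_dense_le: "real (card bad_dense) \<le> 59/100 * real (card (permutations_of_set V))"
proof -
  let ?P = "permutations_of_set V" and ?Z = "tail_sum (9 * card V div 10) h D"
  define t where "t = f D - 41/100 * W"
  have t_pos: "0 < t" using D_value W_pos by (simp add: t_def)
  have "real (card bad_dense) * t \<le> real (card {xs\<in>?P. t \<le> ?Z xs}) * t"
    using t_pos by (intro mult_right_mono) (auto simp: t_def intro: card_mono)
  also have "\<dots> \<le> (\<Sum>xs\<in>?P. ?Z xs)"
    using h_nonneg by (intro card_threshold_mult_le_sum) (auto simp: tail_sum_def sum_nonneg)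
  also have "\<dots> = real (card ?P) * (p * f D)"
    using sum_tail_sum[OF finite_V D_subset] h_sum by simp
  also have "\<dots> \<le> real (card ?P) * (59/100 * t)"
  proof -
    have "p * f D \<le> (1/10 + 1/200000000) * f D"
      using p_bounds D_value W_pos by (intro mult_right_mono) auto
    also have "\<dots> \<le> 59/100 * t" using D_value W_pos by (simp add: t_def)
    finally show ?thesis by (intro mult_left_mono) auto
  qed
  finally show ?thesis using t_pos by (simp add: mult.commute)
qed

lemma card_bad_light_le: "real (card bad_light) \<le> 6/100 * real (card (permutations_of_set V))"
proof -
  let ?P = "permutations_of_set V"
  define \<theta> where "\<theta> = 10000 * W / real k"
  have light_V: "light \<subseteq> V" using Q_subset by auto
  have "(\<Sum>x\<in>light. (excess x)^2) \<le> (\<Sum>x\<in>light. g x * \<theta> + (1 / (10 * real k) * W)^2)"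
    using g_nonneg W_pos k_pos
    by (intro sum_mono square_diff_le) (auto simp: \<theta>_def)
  also have "\<dots> = \<theta> * sum g light + real (card light) * (1 / (10 * real k) * W)^2"
    by (simp add: sum.distrib sum_distrib_left mult.commute)
  also have "\<dots> \<le> \<theta> * W + real k * (1 / (10 * real k) * W)^2"
  proof (intro add_mono mult_left_mono mult_right_mono)
    show "sum g light \<le> W" using sum_g_le sum_mono2[OF finite_Q, of light g] g_nonneg by force
    show "real (card light) \<le> real k" using card_mono[OF finite_Q, of light] card_Q by simp
  qed (use W_pos k_pos in \<open>auto simp: \<theta>_def\<close>)
  also have "\<dots> = W^2 * (1000001/100) / real k"
    using k_pos by (simp add: \<theta>_def field_simps power2_eq_square)
  also have "\<dots> \<le> W^2 * (1000001/100) / 200000000"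
    using k_large W_pos by (intro divide_left_mono) auto
  finally have sq: "(\<Sum>x\<in>light. (excess x)^2) \<le> W^2 * (1000001/100) / 200000000" .
  have "real (card bad_light) * (W/100)^2 \<le> real (card ?P) * p * (\<Sum>x\<in>light. (excess x)^2)"
    using card_tail_sum_below_le[OF finite_V light_V, of "W/100"] W_pos by simp
  also have "\<dots> \<le> real (card ?P) * (1/10 + 1/200000000) * (W^2 * (1000001/100) / 200000000)"
    using p_bounds sq tail_fraction_nonneg
    by (intro mult_mono mult_left_mono) (auto simp: sum_nonneg)
  also have "\<dots> \<le> (6/100 * real (card ?P)) * (W/100)^2"
    using W_pos by (simp add: power2_eq_square field_simps zero_le_mult_iff)
  finally show ?thesis using W_pos by simp
qed

end

lemma (in monotone_submodular) dense_instance_exists: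
  assumes "finite V" "f {} = 0" "k \<le> card V" "200000000 \<le> real k" "0 < OPT V f k"
    and "dense V f k D"
  shows "\<exists>Sopt h g. dense_instance V f k (OPT V f k) D Sopt h g"
proof -
  have D: "D \<subseteq> V" "finite D" using assms(1,6) by (auto simp: dense_def intro: finite_subset)
  obtain Sopt where Sopt: "Sopt \<subseteq> V" "card Sopt \<le> k" "f Sopt = OPT V f k"
    using OPT_attained[OF assms(1)] by blast
  obtain h where "\<forall>x. 0 \<le> h x" "sum h D = f D" "\<forall>U. U \<subseteq> D \<longrightarrow> sum h U \<le> f U"
    using modular_lower_bound[OF D(2,1), of "{}"] assms(2) by auto
  moreover obtain g where "\<forall>x. 0 \<le> g x" "sum g (Sopt - D) = f (D \<union> (Sopt - D)) - f D"
    "\<forall>U. U \<subseteq> Sopt - D \<longrightarrow> sum g U \<le> f (D \<union> U) - f D"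
    using modular_lower_bound[of "Sopt - D" D] Sopt(1) D assms(1) by (auto intro: finite_subset)
  ultimately have "dense_instance V f k (OPT V f k) D Sopt h g"
    using assms Sopt monotone submodular
    by unfold_locales (auto simp: dense_def eta_def gamma_def intro: OPT_upper)
  then show ?thesis by blast
qed

theorem mainTheorem5:
  fixes V :: "'a set" and f :: "'a set \<Rightarrow> real" and k :: nat
  assumes "finite V"
    and "monotone_fn V f" and "submodular V f" and "f {} = 0"
    and "\<forall>S\<subseteq>V. f S \<ge> 0"
    and "k \<le> card V" and "real k \<ge> 2 * 10^8"
    and "\<exists>D. dense V f k D"
  shows "measure_pmf.prob (pmf_of_set (permutations_of_set V))
           {xs. f (algorithm1 f (OPT V f k) k xs) \<ge> 50025 / 100000 * OPT V f k} \<ge> 1 / 100"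
proof -
  interpret monotone_submodular V f using assms(2,3) by unfold_locales
  let ?P = "permutations_of_set V" and ?W = "OPT V f k"
  let ?G = "{xs. f (algorithm1 f ?W k xs) \<ge> 50025 / 100000 * ?W}"
  have P: "finite ?P" "?P \<noteq> {}" using assms(1) by auto
  have "0 \<le> ?W" using OPT_upper[OF assms(1), of "{}" k f] assms(4) by simp
  show ?thesis
  proof (cases "?W = 0")
    case True
    have "algorithm1 f ?W k xs \<subseteq> V" if "xs \<in> ?P" for xs
      using algorithm1_subset[of f ?W k xs] permutations_of_setD(1)[OF that] by simp
    then have "?P - {} - {} \<subseteq> ?G" using True assms(5) by auto
    from prob_pmf_of_set_ge[OF P _ _ this, of 0 0] show ?thesis by simp
  next
    case False
    obtain D where D: "dense V f k D" using assms(8) by blast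
    have "200000000 \<le> real k" "0 < ?W" using assms(7) \<open>0 \<le> ?W\<close> False by simp_all
    then obtain Sopt h g where "dense_instance V f k ?W D Sopt h g"
      using dense_instance_exists[OF assms(1,4,6) _ _ D] by blast
    then interpret dense_instance V f k ?W D Sopt h g .
    have "?P - bad_dense - bad_light \<subseteq> ?G" using good_permutation by blast
    from prob_pmf_of_set_ge[OF P _ _ this card_bad_dense_le card_bad_light_le] show ?thesis by simp
  qed
qed

end
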